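(* Let $(\mathcal M,g)$ be a Riemannian manifold, $U\subset\mathcal M$ geodesically convex (so $\log_x$ is defined on $U$ for $x\in U$), and $\psi:U\to\Omega\subset\mathbb R^d$ a smooth chart that is an affine-cut chart: for every $x\in U$ and every nonzero $w\in T_x\mathcal M$ there are $a_{x,w}\in\mathbb R^d\setminus\{0\}$ and $\beta_{x,w}\in\mathbb R$ with \[ \{y\in U:\langle w,\log_x(y)\rangle_x=0\}=\{y\in U:a_{x,w}^{\mathsf T}\psi(y)=\beta_{x,w}\}. \] Then for every $x\in U$ and nonzero $v\in T_x\mathcal M$, the curve $t\mapsto\psi(\exp_x(tv))$ is, for $|t|$ sufficiently small, contained in the Euclidean affine line through $\psi(x)$ with direction $D\psi_x v$.
   Context: $\exp_x,\log_x$ denote the Riemannian exponential and logarithm maps and $\langle\cdot,\cdot\rangle_x$ the Riemannian inner product on $T_x\mathcal M$; $d=\dim\mathcal M$. *)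

theory Defs
  imports "HOL-Analysis.Analysis"
begin

text \<open>Everything is expressed in the coordinates of the chart psi : U -> Omega.
  Points of U are identified with points of Omega (a subset of real^'n, d = CARD('n)),
  tangent vectors with coordinate vectors (so D psi_x v is the coordinate vector v),
  and the Riemannian metric with its coordinate matrix field G.\<close>

fun Ck_on :: "nat \<Rightarrow> 'a::euclidean_space set \<Rightarrow> ('a \<Rightarrow> 'b::real_normed_vector) \<Rightarrow> bool" where
  "Ck_on 0 S f = continuous_on S f"
| "Ck_on (Suc k) S f =
     (f differentiable_on S \<and> (\<forall>i\<in>Basis. Ck_on k S (\<lambda>x. frechet_derivative f (at x) i)))"

definition C_inf_on :: "'a::euclidean_space set \<Rightarrow> ('a \<Rightarrow> 'b::real_normed_vector) \<Rightarrow> bool" where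
  "C_inf_on S f \<longleftrightarrow> (\<forall>k. Ck_on k S f)"

definition riemannian_metric :: "(real^'n) set \<Rightarrow> (real^'n \<Rightarrow> real^'n^'n) \<Rightarrow> bool" where
  "riemannian_metric \<Omega> G \<longleftrightarrow> open \<Omega> \<and> C_inf_on \<Omega> G \<and>
     (\<forall>p\<in>\<Omega>. transpose (G p) = G p \<and> (\<forall>u. u \<noteq> 0 \<longrightarrow> u \<bullet> (G p *v u) > 0))"

definition rinner :: "(real^'n \<Rightarrow> real^'n^'n) \<Rightarrow> real^'n \<Rightarrow> real^'n \<Rightarrow> real^'n \<Rightarrow> real" where
  "rinner G p u w = u \<bullet> (G p *v w)"

definition dmetric :: "(real^'n \<Rightarrow> real^'n^'n) \<Rightarrow> real^'n \<Rightarrow> 'n \<Rightarrow> real^'n^'n" where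
  "dmetric G p i = frechet_derivative G (at p) (axis i 1)"

definition christoffel :: "(real^'n \<Rightarrow> real^'n^'n) \<Rightarrow> real^'n \<Rightarrow> 'n \<Rightarrow> 'n \<Rightarrow> 'n \<Rightarrow> real" where
  "christoffel G p k i j =
     (1/2) * (\<Sum>l\<in>UNIV. matrix_inv (G p) $ k $ l *
        (dmetric G p i $ j $ l + dmetric G p j $ i $ l - dmetric G p l $ i $ j))"

definition geodesic_on ::
  "(real^'n) set \<Rightarrow> (real^'n \<Rightarrow> real^'n^'n) \<Rightarrow> real set \<Rightarrow> (real \<Rightarrow> real^'n) \<Rightarrow> (real \<Rightarrow> real^'n) \<Rightarrow> bool" where
  "geodesic_on \<Omega> G I \<gamma> \<gamma>' \<longleftrightarrow>
     (\<forall>t\<in>I. \<gamma> t \<in> \<Omega> \<and> (\<gamma> has_vector_derivative \<gamma>' t) (at t within I) \<and>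
        (\<exists>acc. (\<gamma>' has_vector_derivative acc) (at t within I) \<and>
           (\<forall>k. acc $ k + (\<Sum>i\<in>UNIV. \<Sum>j\<in>UNIV. christoffel G (\<gamma> t) k i j * \<gamma>' t $ i * \<gamma>' t $ j) = 0)))"

definition geodesic_segment ::
  "(real^'n) set \<Rightarrow> (real^'n \<Rightarrow> real^'n^'n) \<Rightarrow> real^'n \<Rightarrow> real^'n \<Rightarrow> real^'n \<Rightarrow> bool" where
  "geodesic_segment \<Omega> G p v q \<longleftrightarrow>
     (\<exists>\<gamma> \<gamma>'. geodesic_on \<Omega> G {0..1} \<gamma> \<gamma>' \<and> \<gamma> 0 = p \<and> \<gamma>' 0 = v \<and> \<gamma> 1 = q)"

definition rexp :: "(real^'n) set \<Rightarrow> (real^'n \<Rightarrow> real^'n^'n) \<Rightarrow> real^'n \<Rightarrow> real^'n \<Rightarrow> real^'n" where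
  "rexp \<Omega> G p v = (THE q. geodesic_segment \<Omega> G p v q)"

definition rlog :: "(real^'n) set \<Rightarrow> (real^'n \<Rightarrow> real^'n^'n) \<Rightarrow> real^'n \<Rightarrow> real^'n \<Rightarrow> real^'n" where
  "rlog \<Omega> G p q = (THE v. geodesic_segment \<Omega> G p v q)"

definition geodesically_convex :: "(real^'n) set \<Rightarrow> (real^'n \<Rightarrow> real^'n^'n) \<Rightarrow> bool" where
  "geodesically_convex \<Omega> G \<longleftrightarrow> (\<forall>p\<in>\<Omega>. \<forall>q\<in>\<Omega>. \<exists>!v. geodesic_segment \<Omega> G p v q)"

definition affine_cut :: "(real^'n) set \<Rightarrow> (real^'n \<Rightarrow> real^'n^'n) \<Rightarrow> bool" where
  "affine_cut \<Omega> G \<longleftrightarrow>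
     (\<forall>p\<in>\<Omega>. \<forall>w. w \<noteq> 0 \<longrightarrow> (\<exists>a \<beta>. a \<noteq> 0 \<and>
        {q\<in>\<Omega>. rinner G p w (rlog \<Omega> G p q) = 0} = {q\<in>\<Omega>. a \<bullet> q = \<beta>}))"

end

theory Submission
  imports Defs
begin

text \<open>Fix p. Since log_p p = 0, each cut set {q. <w, log_p q>_p = 0} is a Euclidean hyperplane
  through p, with normal a_w say. It contains the whole geodesic from p to any of its points,
  and differentiating at p shows that a_w is also orthogonal to log_p q. Hence for w2 with
  G_p w2 = a_w, the cut sets of all nonzero combinations of w and w2 coincide with that of w;
  as every point of the domain lies in the cut set of one such combination, a hyperplane could not
  be the cut set of w unless a_w is parallel to G_p w. So <w, log_p q>_p = 0 iff
  <w, q - p>_p = 0 for all w, i.e. log_p q is a multiple of q - p, and a continuity argument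
  along the geodesic shows that the factor is positive. Consequently log_p is injective,
  exp_p (log_p q) = q, and exp_p (t v) = p + s v whenever t v lies in the image of log_p,
  which contains a segment around 0 in every direction because the domain is open.\<close>

lemma orthogonal_subset_imp_parallel:
  fixes a b :: "'a::real_inner"
  assumes "a \<noteq> 0" and "\<And>x. a \<bullet> x = 0 \<Longrightarrow> b \<bullet> x = 0"
  shows "b = ((b \<bullet> a) / (a \<bullet> a)) *\<^sub>R a"
proof -
  define c where "c = (b \<bullet> a) / (a \<bullet> a)"
  have "a \<bullet> (b - c *\<^sub>R a) = 0"
    using assms(1) by (simp add: c_def inner_diff_right inner_commute)
  moreover from this have "b \<bullet> (b - c *\<^sub>R a) = 0" using assms(2) by blast
  ultimately have "(b - c *\<^sub>R a) \<bullet> (b - c *\<^sub>R a) = 0" by (simp add: inner_diff_left)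
  then show ?thesis unfolding c_def[symmetric] by simp
qed

lemma open_contains_segment_around:
  fixes p x :: "'a::real_normed_vector"
  assumes "open S" and "p \<in> S"
  obtains r where "r > 0" and "\<And>t. \<bar>t\<bar> \<le> r \<Longrightarrow> p + t *\<^sub>R x \<in> S"
proof -
  obtain e where e: "e > 0" "ball p e \<subseteq> S" using assms open_contains_ball by blast
  define c where "c = norm x + 1"
  have "c > 0" by (simp add: c_def add_nonneg_pos)
  define r where "r = e / (2 * c)"
  have "p + t *\<^sub>R x \<in> S" if t: "\<bar>t\<bar> \<le> r" for t
  proof -
    have "norm (t *\<^sub>R x) \<le> \<bar>t\<bar> * c" by (simp add: c_def mult_left_mono)
    also have "\<dots> \<le> r * c" using t \<open>c > 0\<close> by (simp add: mult_right_mono)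
    also have "\<dots> < e" using e \<open>c > 0\<close> by (simp add: r_def)
    finally show ?thesis using e by (auto simp: dist_norm)
  qed
  moreover have "r > 0" using e \<open>c > 0\<close> by (simp add: r_def)
  ultimately show ?thesis using that by blast
qed

lemma open_hyperplane_subset_imp_orthogonal_subset:
  fixes a b p :: "'a::real_inner"
  assumes "open S" and "p \<in> S"
    and sub: "\<And>q. q \<in> S \<Longrightarrow> a \<bullet> (q - p) = 0 \<Longrightarrow> b \<bullet> (q - p) = 0"
    and "a \<bullet> x = 0"
  shows "b \<bullet> x = 0"
proof -
  obtain r where "r > 0" and "p + r *\<^sub>R x \<in> S"
    using open_contains_segment_around[OF assms(1,2)] by (metis abs_of_pos order_refl)
  then have "b \<bullet> (r *\<^sub>R x) = 0" using sub[of "p + r *\<^sub>R x"] \<open>a \<bullet> x = 0\<close> by simp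
  then show ?thesis using \<open>r > 0\<close> by simp
qed

lemma has_vector_derivative_vanishing_eq_zero:
  fixes f :: "real \<Rightarrow> 'a::real_normed_vector"
  assumes "a < b" and "(f has_vector_derivative D) (at a within {a..b})"
    and "\<And>s. s \<in> {a..b} \<Longrightarrow> f s = 0"
  shows "D = 0"
proof -
  have "((\<lambda>_. 0) has_vector_derivative D) (at a within {a..b})"
    using assms by (intro has_vector_derivative_transform[OF _ _ assms(2)]) auto
  moreover have "((\<lambda>_. 0) has_vector_derivative 0) (at a within {a..b})"
    by (rule has_vector_derivative_const)
  ultimately show ?thesis
    using vector_derivative_unique_within_closed_interval[of a b a, unfolded cbox_interval] assms(1)
    by (metis atLeastAtMost_iff less_imp_le order_refl)
qed

lemma pos_if_nonvanishing_and_pos_derivative: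
  fixes f :: "real \<Rightarrow> real"
  assumes "a < b" and cont: "continuous_on {a..b} f" and "f a = 0"
    and der: "(f has_real_derivative D) (at a within {a..b})" and "D > 0"
    and nonzero: "\<And>s. s \<in> {a<..b} \<Longrightarrow> f s \<noteq> 0"
  shows "f b > 0"
proof (rule ccontr)
  assume "\<not> f b > 0"
  then have "f b < 0" using nonzero[of b] \<open>a < b\<close> by fastforce
  obtain d where "d > 0" and inc: "\<And>h. h > 0 \<Longrightarrow> a + h \<in> {a..b} \<Longrightarrow> h < d \<Longrightarrow> f a < f (a + h)"
    using has_real_derivative_pos_inc_right[OF der \<open>D > 0\<close>] by blast
  define h where "h = min (d / 2) (b - a)"
  have h: "h > 0" "a + h \<le> b" "h < d" using \<open>d > 0\<close> \<open>a < b\<close> by (auto simp: h_def)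
  then have "f (a + h) > 0" using inc \<open>f a = 0\<close> by auto
  moreover have "continuous_on {a + h..b} f" using cont by (rule continuous_on_subset) (use h in auto)
  ultimately obtain s where "a + h \<le> s" "s \<le> b" "f s = 0"
    using IVT2'[of f b 0 "a + h"] \<open>f b < 0\<close> h by auto
  then show False using nonzero[of s] h by auto
qed

lemma geodesic_on_rescale:
  assumes geo: "geodesic_on \<Omega> G {0..1} \<gamma> \<gamma>'" and s: "s \<in> {0..1}"
  shows "geodesic_on \<Omega> G {0..1} (\<lambda>\<tau>. \<gamma> (s * \<tau>)) (\<lambda>\<tau>. s *\<^sub>R \<gamma>' (s * \<tau>))"
  unfolding geodesic_on_def
proof
  fix t :: real assume t: "t \<in> {0..1}"
  have st: "s * t \<in> {0..1}" using t s by (auto simp: mult_le_one)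
  have img: "(\<lambda>\<tau>. s * \<tau>) ` {0..1} \<subseteq> {0..1}" using s by (auto simp: mult_le_one)
  have scale: "((\<lambda>\<tau>. s * \<tau>) has_vector_derivative s) (at t within {0..1})"
    by (auto intro!: derivative_eq_intros simp: has_real_derivative_iff_has_vector_derivative[symmetric])
  obtain acc where in_\<Omega>: "\<gamma> (s * t) \<in> \<Omega>"
    and vel: "(\<gamma> has_vector_derivative \<gamma>' (s * t)) (at (s * t) within {0..1})"
    and acc: "(\<gamma>' has_vector_derivative acc) (at (s * t) within {0..1})"
    and eq: "\<And>k. acc $ k + (\<Sum>i\<in>UNIV. \<Sum>j\<in>UNIV.
                christoffel G (\<gamma> (s * t)) k i j * \<gamma>' (s * t) $ i * \<gamma>' (s * t) $ j) = 0"
    using geo st unfolding geodesic_on_def by blast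
  have "((\<lambda>\<tau>. \<gamma> (s * \<tau>)) has_vector_derivative s *\<^sub>R \<gamma>' (s * t)) (at t within {0..1})"
    using vector_diff_chain_within[OF scale has_vector_derivative_within_subset[OF vel img]]
    by (simp add: o_def)
  moreover have "((\<lambda>\<tau>. s *\<^sub>R \<gamma>' (s * \<tau>)) has_vector_derivative s *\<^sub>R s *\<^sub>R acc)
      (at t within {0..1})"
    using bounded_linear.has_vector_derivative[OF bounded_linear_scaleR_right
        vector_diff_chain_within[OF scale has_vector_derivative_within_subset[OF acc img]]]
    by (simp add: o_def)
  moreover have "(s *\<^sub>R s *\<^sub>R acc) $ k + (\<Sum>i\<in>UNIV. \<Sum>j\<in>UNIV. christoffel G (\<gamma> (s * t)) k i j *
      (s *\<^sub>R \<gamma>' (s * t)) $ i * (s *\<^sub>R \<gamma>' (s * t)) $ j) = 0" for k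
    using arg_cong[OF eq[of k], of "(*) (s * s)"]
    by (simp add: sum_distrib_left algebra_simps)
  ultimately show "\<gamma> (s * t) \<in> \<Omega> \<and>
      ((\<lambda>\<tau>. \<gamma> (s * \<tau>)) has_vector_derivative s *\<^sub>R \<gamma>' (s * t)) (at t within {0..1}) \<and>
      (\<exists>acc. ((\<lambda>\<tau>. s *\<^sub>R \<gamma>' (s * \<tau>)) has_vector_derivative acc) (at t within {0..1}) \<and>
        (\<forall>k. acc $ k + (\<Sum>i\<in>UNIV. \<Sum>j\<in>UNIV. christoffel G (\<gamma> (s * t)) k i j *
          (s *\<^sub>R \<gamma>' (s * t)) $ i * (s *\<^sub>R \<gamma>' (s * t)) $ j) = 0))"
    using in_\<Omega> by blast
qed

lemma geodesic_segment_rescale: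
  assumes "geodesic_on \<Omega> G {0..1} \<gamma> \<gamma>'" and "s \<in> {0..1}"
  shows "geodesic_segment \<Omega> G (\<gamma> 0) (s *\<^sub>R \<gamma>' 0) (\<gamma> s)"
  unfolding geodesic_segment_def using geodesic_on_rescale[OF assms] by force

lemma geodesic_segment_in: "geodesic_segment \<Omega> G p u q \<Longrightarrow> q \<in> \<Omega>"
  unfolding geodesic_segment_def geodesic_on_def by force

context
  fixes \<Omega> :: "(real^'n) set" and G :: "real^'n \<Rightarrow> real^'n^'n" and p :: "real^'n"
  assumes convex: "geodesically_convex \<Omega> G" and p: "p \<in> \<Omega>"
begin

lemma rlog_eqI:
  assumes "q \<in> \<Omega>" and "geodesic_segment \<Omega> G p u q"
  shows "rlog \<Omega> G p q = u"
proof -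
  have "\<exists>!v. geodesic_segment \<Omega> G p v q"
    using convex p assms(1) unfolding geodesically_convex_def by blast
  then show ?thesis unfolding rlog_def using assms(2) by (rule the1_equality)
qed

lemma geodesic_segment_rlog:
  assumes "q \<in> \<Omega>"
  shows "geodesic_segment \<Omega> G p (rlog \<Omega> G p q) q"
proof -
  have "\<exists>!v. geodesic_segment \<Omega> G p v q"
    using convex p assms unfolding geodesically_convex_def by blast
  then show ?thesis unfolding rlog_def by (rule theI')
qed

lemma rlog_along_geodesic:
  assumes "q \<in> \<Omega>"
  obtains \<gamma> where "\<gamma> 0 = p" and "\<gamma> 1 = q" and "continuous_on {0..1} \<gamma>"
    and "(\<gamma> has_vector_derivative rlog \<Omega> G p q) (at 0 within {0..1})"
    and "\<And>s. s \<in> {0..1} \<Longrightarrow> \<gamma> s \<in> \<Omega>"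
    and "\<And>s. s \<in> {0..1} \<Longrightarrow> rlog \<Omega> G p (\<gamma> s) = s *\<^sub>R rlog \<Omega> G p q"
proof -
  obtain \<gamma> \<gamma>' where geo: "geodesic_on \<Omega> G {0..1} \<gamma> \<gamma>'"
    and ends: "\<gamma> 0 = p" "\<gamma>' 0 = rlog \<Omega> G p q" "\<gamma> 1 = q"
    using geodesic_segment_rlog[OF assms] unfolding geodesic_segment_def by blast
  have vel: "(\<gamma> has_vector_derivative \<gamma>' s) (at s within {0..1})"
    and in_\<Omega>: "\<gamma> s \<in> \<Omega>" if "s \<in> {0..1}" for s
    using geo that unfolding geodesic_on_def by blast+
  have cont: "continuous_on {0..1} \<gamma>"
    using vel continuous_on_eq_continuous_within has_vector_derivative_continuous by blast
  have along: "rlog \<Omega> G p (\<gamma> s) = s *\<^sub>R rlog \<Omega> G p q" if "s \<in> {0..1}" for s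
    using rlog_eqI[OF in_\<Omega>[OF that]] geodesic_segment_rescale[OF geo that] ends by simp
  have "(\<gamma> has_vector_derivative rlog \<Omega> G p q) (at 0 within {0..1})"
    using vel[of 0] ends(2) by simp
  then show thesis using that[OF ends(1,3) cont _ in_\<Omega> along] by blast
qed

lemma rlog_self: "rlog \<Omega> G p p = 0"
proof -
  obtain \<gamma> where "\<gamma> 0 = p"
    and along: "\<And>s. s \<in> {0..1} \<Longrightarrow> rlog \<Omega> G p (\<gamma> s) = s *\<^sub>R rlog \<Omega> G p p"
    using rlog_along_geodesic[OF p] by blast
  then show ?thesis using along[of 0] by simp
qed

lemma rlog_image_star_shaped:
  assumes "u \<in> rlog \<Omega> G p ` \<Omega>" and s: "s \<in> {0..1}"
  shows "s *\<^sub>R u \<in> rlog \<Omega> G p ` \<Omega>"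
proof -
  obtain q where "q \<in> \<Omega>" and "u = rlog \<Omega> G p q" using assms(1) by blast
  then obtain \<gamma> where "\<gamma> s \<in> \<Omega>" and "s *\<^sub>R u = rlog \<Omega> G p (\<gamma> s)"
    using rlog_along_geodesic[of q] s by metis
  then show ?thesis by (rule rev_image_eqI)
qed

lemma cut_normal_orthogonal_rlog:
  assumes cut: "\<And>x. x \<in> \<Omega> \<Longrightarrow> rinner G p w (rlog \<Omega> G p x) = 0 \<longleftrightarrow> a \<bullet> (x - p) = 0"
    and q: "q \<in> \<Omega>" and w: "rinner G p w (rlog \<Omega> G p q) = 0"
  shows "a \<bullet> rlog \<Omega> G p q = 0"
proof -
  obtain \<gamma> where "\<gamma> 0 = p" and vel: "(\<gamma> has_vector_derivative rlog \<Omega> G p q) (at 0 within {0..1})"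
    and in_\<Omega>: "\<And>s. s \<in> {0..1} \<Longrightarrow> \<gamma> s \<in> \<Omega>"
    and along: "\<And>s. s \<in> {0..1} \<Longrightarrow> rlog \<Omega> G p (\<gamma> s) = s *\<^sub>R rlog \<Omega> G p q"
    using rlog_along_geodesic[OF q] by blast
  have vanish: "a \<bullet> (\<gamma> s - p) = 0" if "s \<in> {0..1}" for s
    using cut[OF in_\<Omega>] along w that by (simp add: rinner_def matrix_vector_mult_scaleR)
  have "((\<lambda>s. a \<bullet> (\<gamma> s - p)) has_vector_derivative a \<bullet> rlog \<Omega> G p q) (at 0 within {0..1})"
    using bounded_linear.has_vector_derivative[OF bounded_linear_inner_right
        has_vector_derivative_diff_const[THEN iffD2, OF vel]] .
  then show ?thesis by (rule has_vector_derivative_vanishing_eq_zero[OF zero_less_one _ vanish])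
qed

context
  assumes metric: "riemannian_metric \<Omega> G" and cut: "affine_cut \<Omega> G"
begin

lemma open_domain: "open \<Omega>"
  using metric unfolding riemannian_metric_def by (elim conjE)

lemma metric_symmetric: "transpose (G p) = G p"
  and metric_pos_def: "u \<noteq> 0 \<Longrightarrow> 0 < u \<bullet> (G p *v u)"
proof -
  have "\<forall>q\<in>\<Omega>. transpose (G q) = G q \<and> (\<forall>u. u \<noteq> 0 \<longrightarrow> u \<bullet> (G q *v u) > 0)"
    using metric unfolding riemannian_metric_def by (elim conjE)
  then show "transpose (G p) = G p" and "u \<noteq> 0 \<Longrightarrow> 0 < u \<bullet> (G p *v u)"
    using p by blast+
qed

lemma rinner_eq_inner_metric: "rinner G p w x = (G p *v w) \<bullet> x"
proof -
  have "G p *v w = w v* G p"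
    using transpose_matrix_vector[of "G p" w] metric_symmetric by simp
  then show ?thesis unfolding rinner_def by (simp add: dot_lmul_matrix)
qed

lemma metric_mult_eq_zero_iff: "G p *v x = 0 \<longleftrightarrow> x = 0"
  using metric_pos_def[of x] by (cases "x = 0") auto

lemma metric_surj: "\<exists>y. G p *v y = a"
proof -
  have "\<exists>B. B ** G p = mat 1"
    using metric_mult_eq_zero_iff matrix_left_invertible_ker by blast
  then have "surj ((*v) (G p))"
    using matrix_left_right_inverse matrix_right_invertible_surjective by blast
  then obtain y where "a = G p *v y" by (rule surjE)
  then show ?thesis by (intro exI[of _ y]) simp
qed

lemma cut_hyperplane_through_base:
  assumes "w \<noteq> 0"
  obtains a where "a \<noteq> 0"
    and "\<And>q. q \<in> \<Omega> \<Longrightarrow> rinner G p w (rlog \<Omega> G p q) = 0 \<longleftrightarrow> a \<bullet> (q - p) = 0"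
proof -
  have "\<forall>w. w \<noteq> 0 \<longrightarrow> (\<exists>a \<beta>. a \<noteq> 0 \<and>
      {q\<in>\<Omega>. rinner G p w (rlog \<Omega> G p q) = 0} = {q\<in>\<Omega>. a \<bullet> q = \<beta>})"
    using cut p unfolding affine_cut_def by (rule bspec)
  then obtain a \<beta> where "a \<noteq> 0"
    and cut_set: "{q\<in>\<Omega>. rinner G p w (rlog \<Omega> G p q) = 0} = {q\<in>\<Omega>. a \<bullet> q = \<beta>}"
    using assms by (elim allE impE exE conjE)
  have "p \<in> {q\<in>\<Omega>. rinner G p w (rlog \<Omega> G p q) = 0}"
    using p by (simp add: rlog_self rinner_def)
  then have "a \<bullet> p = \<beta>" unfolding cut_set by simp
  have "rinner G p w (rlog \<Omega> G p q) = 0 \<longleftrightarrow> a \<bullet> (q - p) = 0" if "q \<in> \<Omega>" for q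
    using cut_set[THEN eqset_imp_iff, of q] that \<open>a \<bullet> p = \<beta>\<close> by (simp add: inner_diff_right)
  then show thesis using that \<open>a \<noteq> 0\<close> by blast
qed

lemma cut_set_of_combination:
  assumes cut_w: "\<And>x. x \<in> \<Omega> \<Longrightarrow> rinner G p w (rlog \<Omega> G p x) = 0 \<longleftrightarrow> a \<bullet> (x - p) = 0"
    and w2: "G p *v w2 = a" and "a \<noteq> 0"
    and "w' = c *\<^sub>R w + d *\<^sub>R w2" and "w' \<noteq> 0"
    and q: "q \<in> \<Omega>" and "rinner G p w' (rlog \<Omega> G p q) = 0"
  shows "rinner G p w (rlog \<Omega> G p q) = 0"
proof -
  have rinner_w': "rinner G p w' y = c * rinner G p w y + d * (a \<bullet> y)" for y
    using assms(4) w2 rinner_eq_inner_metric[of w2] by (simp add: rinner_def inner_add_left)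
  obtain a' where "a' \<noteq> 0"
    and cut_w': "\<And>x. x \<in> \<Omega> \<Longrightarrow> rinner G p w' (rlog \<Omega> G p x) = 0 \<longleftrightarrow> a' \<bullet> (x - p) = 0"
    using cut_hyperplane_through_base[OF \<open>w' \<noteq> 0\<close>] by blast
  have "a' \<bullet> y = 0" if "a \<bullet> y = 0" for y
  proof (rule open_hyperplane_subset_imp_orthogonal_subset[OF open_domain p _ that])
    fix x assume x: "x \<in> \<Omega>" "a \<bullet> (x - p) = 0"
    then have "rinner G p w (rlog \<Omega> G p x) = 0" using cut_w by blast
    moreover from this have "a \<bullet> rlog \<Omega> G p x = 0"
      using cut_normal_orthogonal_rlog[OF cut_w x(1)] by blast
    ultimately have "rinner G p w' (rlog \<Omega> G p x) = 0" using rinner_w' by simp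
    then show "a' \<bullet> (x - p) = 0" using cut_w' x(1) by blast
  qed
  then have "a' = ((a' \<bullet> a) / (a \<bullet> a)) *\<^sub>R a"
    using orthogonal_subset_imp_parallel \<open>a \<noteq> 0\<close> by blast
  moreover have "a' \<bullet> (q - p) = 0" using cut_w' q assms(7) by blast
  ultimately have "a \<bullet> (q - p) = 0" using \<open>a' \<noteq> 0\<close> by (metis inner_scaleR_left mult_eq_0_iff scale_zero_left)
  then show ?thesis using cut_w q by blast
qed

lemma cut_normal_parallel:
  assumes cut_w: "\<And>x. x \<in> \<Omega> \<Longrightarrow> rinner G p w (rlog \<Omega> G p x) = 0 \<longleftrightarrow> a \<bullet> (x - p) = 0"
  shows "\<exists>c. a = c *\<^sub>R (G p *v w)"
proof (rule ccontr)
  assume nonparallel: "\<nexists>c. a = c *\<^sub>R (G p *v w)"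
  then have "a \<noteq> 0" by (metis scale_zero_left)
  obtain w2 where w2: "G p *v w2 = a" using metric_surj by blast
  have "rinner G p w (rlog \<Omega> G p q) = 0" if q: "q \<in> \<Omega>" for q
  proof -
    define \<alpha> \<beta> where "\<alpha> = rinner G p w (rlog \<Omega> G p q)" and "\<beta> = rinner G p w2 (rlog \<Omega> G p q)"
    define w' where "w' = \<beta> *\<^sub>R w + (- \<alpha>) *\<^sub>R w2"
    have "rinner G p w' (rlog \<Omega> G p q) = 0"
      by (simp add: w'_def \<alpha>_def \<beta>_def rinner_def inner_diff_left)
    show ?thesis
    proof (cases "w' = 0")
      case False
      then show ?thesis
        using cut_set_of_combination[OF cut_w w2 \<open>a \<noteq> 0\<close> w'_def] q
          \<open>rinner G p w' (rlog \<Omega> G p q) = 0\<close> by blast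
    next
      case True
      show ?thesis
      proof (rule ccontr)
        assume "rinner G p w (rlog \<Omega> G p q) \<noteq> 0"
        then have "w2 = (\<beta> / \<alpha>) *\<^sub>R w"
          using True by (simp add: w'_def \<alpha>_def eq_vector_fraction_iff add_eq_0_iff2)
        then have "a = (\<beta> / \<alpha>) *\<^sub>R (G p *v w)" using w2 by (simp add: matrix_vector_mult_scaleR)
        then show False using nonparallel by blast
      qed
    qed
  qed
  then have "a \<bullet> a = 0"
    using open_hyperplane_subset_imp_orthogonal_subset[OF open_domain p, of 0 a] cut_w by simp
  then show False using \<open>a \<noteq> 0\<close> by simp
qed

lemma rinner_rlog_eq_zero_iff:
  assumes "q \<in> \<Omega>"
  shows "rinner G p w (rlog \<Omega> G p q) = 0 \<longleftrightarrow> rinner G p w (q - p) = 0"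
proof (cases "w = 0")
  case True
  then show ?thesis by (simp add: rinner_def)
next
  case False
  obtain a where "a \<noteq> 0"
    and cut_w: "\<And>x. x \<in> \<Omega> \<Longrightarrow> rinner G p w (rlog \<Omega> G p x) = 0 \<longleftrightarrow> a \<bullet> (x - p) = 0"
    using cut_hyperplane_through_base[OF False] by blast
  obtain c where "a = c *\<^sub>R (G p *v w)" using cut_normal_parallel[OF cut_w] by blast
  with \<open>a \<noteq> 0\<close> have "c \<noteq> 0" by auto
  have "rinner G p w (rlog \<Omega> G p q) = 0 \<longleftrightarrow> a \<bullet> (q - p) = 0" using cut_w assms by blast
  also have "\<dots> \<longleftrightarrow> (G p *v w) \<bullet> (q - p) = 0" using \<open>a = _\<close> \<open>c \<noteq> 0\<close> by simp
  also have "\<dots> \<longleftrightarrow> rinner G p w (q - p) = 0" by (simp add: rinner_eq_inner_metric)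
  finally show ?thesis .
qed

lemma rlog_eq_zero_iff:
  assumes "q \<in> \<Omega>"
  shows "rlog \<Omega> G p q = 0 \<longleftrightarrow> q = p"
proof
  assume "rlog \<Omega> G p q = 0"
  then have "rinner G p (q - p) (q - p) = 0"
    using rinner_rlog_eq_zero_iff[OF assms, of "q - p"] by (simp add: rinner_def)
  then show "q = p" using metric_pos_def[of "q - p"] by (auto simp: rinner_def)
qed (simp add: rlog_self)

lemma rlog_parallel:
  assumes "q \<in> \<Omega>"
  shows "\<exists>k. q - p = k *\<^sub>R rlog \<Omega> G p q"
proof (cases "q = p")
  case True
  then show ?thesis by simp
next
  case False
  then have "G p *v rlog \<Omega> G p q \<noteq> 0"
    using assms rlog_eq_zero_iff metric_mult_eq_zero_iff by blast
  moreover have "(G p *v (q - p)) \<bullet> x = 0" if "(G p *v rlog \<Omega> G p q) \<bullet> x = 0" for x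
    using that rinner_rlog_eq_zero_iff[OF assms, of x] by (simp add: rinner_def inner_commute)
  ultimately obtain k where "G p *v (q - p) = k *\<^sub>R (G p *v rlog \<Omega> G p q)"
    using orthogonal_subset_imp_parallel by blast
  then have "G p *v (q - p - k *\<^sub>R rlog \<Omega> G p q) = 0"
    by (simp add: matrix_vector_mult_diff_distrib matrix_vector_mult_scaleR)
  then show ?thesis using metric_mult_eq_zero_iff by auto
qed

lemma rlog_geodesic_on_line:
  assumes q: "q \<in> \<Omega>" and u: "rlog \<Omega> G p q \<noteq> 0"
  obtains \<gamma> \<rho> where "\<gamma> 1 = q" and "continuous_on {0..1} \<rho>" and "\<rho> 0 = 0"
    and "(\<rho> has_real_derivative 1) (at 0 within {0..1})"
    and "\<And>s. s \<in> {0..1} \<Longrightarrow> rlog \<Omega> G p (\<gamma> s) = s *\<^sub>R rlog \<Omega> G p q"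
    and "\<And>s. s \<in> {0..1} \<Longrightarrow> \<gamma> s = p + \<rho> s *\<^sub>R rlog \<Omega> G p q"
proof -
  define u where "u = rlog \<Omega> G p q"
  obtain \<gamma> where "\<gamma> 0 = p" and "\<gamma> 1 = q" and cont: "continuous_on {0..1} \<gamma>"
    and vel: "(\<gamma> has_vector_derivative u) (at 0 within {0..1})"
    and in_\<Omega>: "\<And>s. s \<in> {0..1} \<Longrightarrow> \<gamma> s \<in> \<Omega>"
    and along: "\<And>s. s \<in> {0..1} \<Longrightarrow> rlog \<Omega> G p (\<gamma> s) = s *\<^sub>R u"
    using rlog_along_geodesic[OF q] unfolding u_def by blast
  define \<rho> where "\<rho> s = ((\<gamma> s - p) \<bullet> u) / (u \<bullet> u)" for s
  have line: "\<gamma> s = p + \<rho> s *\<^sub>R u" if s: "s \<in> {0..1}" for s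
  proof -
    obtain k where "\<gamma> s - p = k *\<^sub>R rlog \<Omega> G p (\<gamma> s)" using rlog_parallel[OF in_\<Omega>[OF s]] by blast
    then have "\<gamma> s - p = (k * s) *\<^sub>R u" using along s by simp
    then show ?thesis using u by (simp add: \<rho>_def u_def algebra_simps)
  qed
  have "continuous_on {0..1} \<rho>"
    unfolding \<rho>_def by (intro continuous_intros cont) (simp add: u u_def)
  moreover have "(\<rho> has_real_derivative 1) (at 0 within {0..1})"
  proof -
    have "((\<lambda>s. (\<gamma> s - p) \<bullet> u) has_vector_derivative u \<bullet> u) (at 0 within {0..1})"
      using bounded_linear.has_vector_derivative[OF bounded_linear_inner_left
          has_vector_derivative_diff_const[THEN iffD2, OF vel]] .
    from bounded_linear.has_vector_derivative[OF bounded_linear_divide this, of "u \<bullet> u"]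
    show ?thesis using u unfolding \<rho>_def u_def by (simp add: has_real_derivative_iff_has_vector_derivative)
  qed
  moreover have "\<rho> 0 = 0" using \<open>\<gamma> 0 = p\<close> by (simp add: \<rho>_def)
  ultimately show thesis using that \<open>\<gamma> 1 = q\<close> along line unfolding u_def by blast
qed

lemma rlog_positive_direction:
  assumes q: "q \<in> \<Omega>"
  obtains r where "r > 0" and "q = p + r *\<^sub>R rlog \<Omega> G p q"
proof (cases "q = p")
  case True
  then show ?thesis using that[of 1] by (simp add: rlog_self)
next
  case False
  then have u: "rlog \<Omega> G p q \<noteq> 0" using rlog_eq_zero_iff q by blast
  obtain \<gamma> \<rho> where "\<gamma> 1 = q" and "continuous_on {0..1} \<rho>" and "\<rho> 0 = 0"
    and "(\<rho> has_real_derivative 1) (at 0 within {0..1})"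
    and along: "\<And>s. s \<in> {0..1} \<Longrightarrow> rlog \<Omega> G p (\<gamma> s) = s *\<^sub>R rlog \<Omega> G p q"
    and line: "\<And>s. s \<in> {0..1} \<Longrightarrow> \<gamma> s = p + \<rho> s *\<^sub>R rlog \<Omega> G p q"
    using rlog_geodesic_on_line[OF q u] by blast
  have "\<rho> s \<noteq> 0" if s: "s \<in> {0<..1}" for s
  proof
    assume "\<rho> s = 0"
    then have "\<gamma> s = p" using line s by simp
    then have "s *\<^sub>R rlog \<Omega> G p q = 0" using along[of s] s by (simp add: rlog_self)
    then show False using s u by simp
  qed
  then have "\<rho> 1 > 0"
    using pos_if_nonvanishing_and_pos_derivative[of 0 1 \<rho>] \<open>continuous_on {0..1} \<rho>\<close>
      \<open>\<rho> 0 = 0\<close> \<open>(\<rho> has_real_derivative 1) (at 0 within {0..1})\<close> by simp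
  then show ?thesis using that line[of 1] \<open>\<gamma> 1 = q\<close> by simp
qed

lemma rlog_eq_on_ray_imp_eq:
  assumes q2: "q2 \<in> \<Omega>" and log1: "rlog \<Omega> G p q1 = u" and log2: "rlog \<Omega> G p q2 = u"
    and "u \<noteq> 0" and r1: "q1 = p + r1 *\<^sub>R u" and r2: "q2 = p + r2 *\<^sub>R u" and "0 < r1" "r1 \<le> r2"
  shows "q1 = q2"
proof -
  obtain \<gamma> \<rho> where "\<gamma> 1 = q2" and "continuous_on {0..1} \<rho>" and "\<rho> 0 = 0"
    and "(\<rho> has_real_derivative 1) (at 0 within {0..1})"
    and along: "\<And>s. s \<in> {0..1} \<Longrightarrow> rlog \<Omega> G p (\<gamma> s) = s *\<^sub>R u"
    and line: "\<And>s. s \<in> {0..1} \<Longrightarrow> \<gamma> s = p + \<rho> s *\<^sub>R u"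
    using rlog_geodesic_on_line[OF q2, unfolded log2, OF \<open>u \<noteq> 0\<close>] by blast
  have "\<rho> 1 *\<^sub>R u = r2 *\<^sub>R u" using line[of 1] r2 \<open>\<gamma> 1 = q2\<close> by auto
  then have "\<rho> 1 = r2" using \<open>u \<noteq> 0\<close> by simp
  then obtain s where s: "s \<in> {0..1}" and "\<rho> s = r1"
    using IVT'[of \<rho> 0 r1 1] \<open>continuous_on {0..1} \<rho>\<close> \<open>\<rho> 0 = 0\<close> \<open>0 < r1\<close> \<open>r1 \<le> r2\<close> by auto
  then have "\<gamma> s = q1" using line r1 by simp
  then have "s *\<^sub>R u = 1 *\<^sub>R u" using along[OF s] log1 by simp
  then have "s = 1" using \<open>u \<noteq> 0\<close> by (metis scaleR_cancel_right)
  then show ?thesis using \<open>\<gamma> s = q1\<close> \<open>\<gamma> 1 = q2\<close> by simp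
qed

lemma rlog_inj_on: "inj_on (rlog \<Omega> G p) \<Omega>"
proof (rule inj_onI)
  fix q1 q2 assume q1: "q1 \<in> \<Omega>" and q2: "q2 \<in> \<Omega>" and same_log: "rlog \<Omega> G p q1 = rlog \<Omega> G p q2"
  define u where "u = rlog \<Omega> G p q2"
  note logs = same_log[folded u_def] u_def[symmetric]
  obtain r1 where "r1 > 0" and r1: "q1 = p + r1 *\<^sub>R u"
    using rlog_positive_direction[OF q1, unfolded logs] by blast
  obtain r2 where "r2 > 0" and r2: "q2 = p + r2 *\<^sub>R u"
    using rlog_positive_direction[OF q2, unfolded logs] by blast
  show "q1 = q2"
  proof (cases "u = 0")
    case True
    then have "q1 = p" and "q2 = p" using rlog_eq_zero_iff q1 q2 logs by simp_all
    then show ?thesis by simp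
  next
    case False
    show ?thesis
    proof (cases "r1 \<le> r2")
      case True
      then show ?thesis using rlog_eq_on_ray_imp_eq[OF q2 logs False r1 r2 \<open>r1 > 0\<close>] by blast
    next
      case False
      then show ?thesis
        using rlog_eq_on_ray_imp_eq[OF q1 logs(2,1) \<open>u \<noteq> 0\<close> r2 r1 \<open>r2 > 0\<close>] by simp
    qed
  qed
qed

lemma rexp_rlog:
  assumes "q \<in> \<Omega>"
  shows "rexp \<Omega> G p (rlog \<Omega> G p q) = q"
  unfolding rexp_def
proof (rule the_equality)
  show "geodesic_segment \<Omega> G p (rlog \<Omega> G p q) q" using geodesic_segment_rlog[OF assms] .
next
  fix q' assume seg: "geodesic_segment \<Omega> G p (rlog \<Omega> G p q) q'"
  then have "q' \<in> \<Omega>" by (rule geodesic_segment_in)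
  moreover from this have "rlog \<Omega> G p q' = rlog \<Omega> G p q" by (rule rlog_eqI[OF _ seg])
  ultimately show "q' = q" using inj_onD[OF rlog_inj_on _ _ assms] by blast
qed

lemma rexp_on_line:
  assumes "u \<in> rlog \<Omega> G p ` \<Omega>"
  shows "\<exists>s. rexp \<Omega> G p u = p + s *\<^sub>R u"
proof -
  obtain q where "q \<in> \<Omega>" and u: "u = rlog \<Omega> G p q" using assms by blast
  obtain r where "q = p + r *\<^sub>R u"
    using rlog_positive_direction[OF \<open>q \<in> \<Omega>\<close>] u by blast
  then have "rexp \<Omega> G p u = p + r *\<^sub>R u" using rexp_rlog[OF \<open>q \<in> \<Omega>\<close>] u by simp
  then show ?thesis ..
qed

lemma rlog_image_contains_ray:
  obtains l where "l > 0" and "\<And>t. t \<in> {0..l} \<Longrightarrow> t *\<^sub>R x \<in> rlog \<Omega> G p ` \<Omega>"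
proof -
  obtain r where "r > 0" and "p + r *\<^sub>R x \<in> \<Omega>"
    using open_contains_segment_around[OF open_domain p] by (metis abs_of_pos order_refl)
  define y where "y = p + r *\<^sub>R x"
  have "y \<in> \<Omega>" using \<open>p + r *\<^sub>R x \<in> \<Omega>\<close> by (simp add: y_def)
  obtain k where "k > 0" and k: "y = p + k *\<^sub>R rlog \<Omega> G p y"
    by (rule rlog_positive_direction[OF \<open>y \<in> \<Omega>\<close>])
  have "r *\<^sub>R x = k *\<^sub>R rlog \<Omega> G p y" using trans[OF y_def[symmetric] k] by (rule add_left_imp_eq)
  then have "rlog \<Omega> G p y = (1 / k) *\<^sub>R (r *\<^sub>R x)" using \<open>k > 0\<close> by simp
  then have log_y: "rlog \<Omega> G p y = (r / k) *\<^sub>R x" by simp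
  show thesis
  proof (rule that)
    show "r / k > 0" using \<open>r > 0\<close> \<open>k > 0\<close> by simp
  next
    fix t assume t: "t \<in> {0..r / k}"
    then have "t / (r / k) \<in> {0..1}" using \<open>r > 0\<close> \<open>k > 0\<close> by (simp add: pos_le_divide_eq)
    from rlog_image_star_shaped[OF imageI[OF \<open>y \<in> \<Omega>\<close>] this]
    show "t *\<^sub>R x \<in> rlog \<Omega> G p ` \<Omega>" using \<open>r > 0\<close> \<open>k > 0\<close> by (simp add: log_y)
  qed
qed

end

end

theorem proposition11p1:
  fixes \<Omega> :: "(real^'n) set" and G :: "real^'n \<Rightarrow> real^'n^'n"
  assumes "riemannian_metric \<Omega> G"
    and "geodesically_convex \<Omega> G"
    and "affine_cut \<Omega> G"
  shows "\<forall>p\<in>\<Omega>. \<forall>v. v \<noteq> 0 \<longrightarrow>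
           (\<exists>\<epsilon>>0. \<forall>t. \<bar>t\<bar> < \<epsilon> \<longrightarrow> (\<exists>s. rexp \<Omega> G p (t *\<^sub>R v) = p + s *\<^sub>R v))"
proof (intro ballI allI impI)
  fix p v assume p: "p \<in> \<Omega>"
  note hyps = assms(2) p assms(1,3)
  obtain l1 where "l1 > 0" and l1: "\<And>t. t \<in> {0..l1} \<Longrightarrow> t *\<^sub>R v \<in> rlog \<Omega> G p ` \<Omega>"
    using rlog_image_contains_ray[OF hyps] by blast
  obtain l2 where "l2 > 0" and l2: "\<And>t. t \<in> {0..l2} \<Longrightarrow> t *\<^sub>R (- v) \<in> rlog \<Omega> G p ` \<Omega>"
    using rlog_image_contains_ray[OF hyps] by blast
  have "\<exists>s. rexp \<Omega> G p (t *\<^sub>R v) = p + s *\<^sub>R v" if "\<bar>t\<bar> < min l1 l2" for t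
  proof -
    have "t *\<^sub>R v \<in> rlog \<Omega> G p ` \<Omega>"
      using that l1[of t] l2[of "- t"] by (cases "t \<ge> 0") auto
    then obtain s where "rexp \<Omega> G p (t *\<^sub>R v) = p + s *\<^sub>R (t *\<^sub>R v)"
      using rexp_on_line[OF hyps] by blast
    then show ?thesis by auto
  qed
  then show "\<exists>\<epsilon>>0. \<forall>t. \<bar>t\<bar> < \<epsilon> \<longrightarrow> (\<exists>s. rexp \<Omega> G p (t *\<^sub>R v) = p + s *\<^sub>R v)"
    using \<open>l1 > 0\<close> \<open>l2 > 0\<close> by (metis min_less_iff_conj)
qed

end
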